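(* Assume $(\boldsymbol\Sigma,\sigma)$ is a primitive Markov subshift on a countable alphabet, with associated set $\mathbb F$. Let $A:\boldsymbol\Sigma\to\mathbb R$ be a bounded above and locally H\"older continuous potential such that $\inf A|_{\bigcup_{i\in\mathbb F}[i]}>-\infty$. Then there exists a unique minimal, nonnegative, bounded and locally H\"older continuous function $u_A:\boldsymbol\Sigma\to\mathbb R_+$ satisfying $$A+u_A-u_A\circ\sigma\le\beta_A ,$$ where minimality means: for every nonnegative continuous sub-action $u:\boldsymbol\Sigma\to\mathbb R_+$ (not necessarily locally H\"older continuous) one has $u_A\le u$.
   Context: Let $\mathbf M:\mathbb Z_+\times\mathbb Z_+\to\{0,1\}$ be a transition matrix. Put $\mathcal B_0=\{i:\mathbf M(i,j)=1\text{ for some }j\}$, $\mathcal B_n=\{i:\mathbf M(i,j)=1\text{ for some }j\in\mathcal B_{n-1}\}$. $\mathbf M$ is primitive if there exist $\mathbb F\subseteq\mathbb Z_+$ and an integer $K_0\ge0$ such that for all $i,j\in\bigcap_{n\ge0}\mathcal B_n$ there are $\ell_1,\dots,\ell_{K_0}\in\mathbb F$ with $\mathbf M(i,\ell_1)\mathbf M(\ell_1,\ell_2)\cdots\mathbf M(\ell_{K_0},j)=1$. $\boldsymbol\Sigma=\{\mathbf x\in\mathbb Z_+^{\mathbb Z_+}:\mathbf M(x_j,x_{j+1})=1\ \forall j\}$ with metric $d(\mathbf x,\mathbf y)=\lambda^{\min\{j:x_j\neq y_j\}}$, $\lambda\in(0,1)$ fixed; $\sigma$ the left shift; $[i]=\{\mathbf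 x:x_0=i\}$. $\mathcal M_\sigma$ = $\sigma$-invariant Borel probabilities; $\beta_A=\sup_{\mu\in\mathcal M_\sigma}\int A\,d\mu$. $\mathrm{Var}_k(A)=\sup\{A(\mathbf x)-A(\mathbf y):d(\mathbf x,\mathbf y)\le\lambda^k\}$; $A$ is locally H\"older continuous if there is $H_A>0$ with $\mathrm{Var}_k(A)\le H_A\lambda^k$ for all $k\ge1$. A sub-action for $A$ is a continuous $u:\boldsymbol\Sigma\to\mathbb R$ with $A+u-u\circ\sigma\le\beta_A$ everywhere. *)

theory Defs
  imports "HOL-Probability.Probability"
begin

text \<open>Alphabet Z_+ is modelled by nat; a transition matrix by a boolean relation
  M i j (true iff the matrix entry is 1).\<close>

type_synonym seq = "nat \<Rightarrow> nat"

definition Bset :: "(nat \<Rightarrow> nat \<Rightarrow> bool) \<Rightarrow> nat \<Rightarrow> nat set" where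
  "Bset M n = ((\<lambda>B. {i. \<exists>j\<in>B. M i j}) ^^ n) {i. \<exists>j. M i j}"

definition primitive_with :: "(nat \<Rightarrow> nat \<Rightarrow> bool) \<Rightarrow> nat set \<Rightarrow> bool" where
  "primitive_with M F \<longleftrightarrow> (\<exists>K0::nat. \<forall>i\<in>(\<Inter>n. Bset M n). \<forall>j\<in>(\<Inter>n. Bset M n).
     \<exists>l::nat \<Rightarrow> nat. l 0 = i \<and> l (Suc K0) = j \<and> (\<forall>t\<in>{1..K0}. l t \<in> F)
        \<and> (\<forall>t\<le>K0. M (l t) (l (Suc t))))"

definition SigmaM :: "(nat \<Rightarrow> nat \<Rightarrow> bool) \<Rightarrow> seq set" where
  "SigmaM M = {x. \<forall>j. M (x j) (x (Suc j))}"

definition shift :: "seq \<Rightarrow> seq" where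
  "shift x = (\<lambda>j. x (Suc j))"

definition cyl :: "seq set \<Rightarrow> nat \<Rightarrow> seq set" where
  "cyl S i = {x\<in>S. x 0 = i}"

definition dsh :: "real \<Rightarrow> seq \<Rightarrow> seq \<Rightarrow> real" where
  "dsh lam x y = (if x = y then 0 else lam ^ (LEAST j. x j \<noteq> y j))"

text \<open>Borel sigma-algebra of (Sigma, d): generated by the cylinder sets.\<close>
definition SigmaAlg :: "seq set \<Rightarrow> seq measure" where
  "SigmaAlg S = sigma S {{x\<in>S. x j = a} | j a. True}"

definition invariant_probs :: "seq set \<Rightarrow> seq measure set" where
  "invariant_probs S = {\<mu>. sets \<mu> = sets (SigmaAlg S) \<and> space \<mu> = S \<and> prob_space \<mu>
      \<and> shift \<in> measurable \<mu> \<mu> \<and> distr \<mu> \<mu> shift = \<mu>}"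

text \<open>Extended-real valued integral (may be -infinity for functions bounded above).\<close>
definition eint :: "seq measure \<Rightarrow> (seq \<Rightarrow> real) \<Rightarrow> ereal" where
  "eint \<mu> f = enn2ereal (\<integral>\<^sup>+ x. ennreal (f x) \<partial>\<mu>) - enn2ereal (\<integral>\<^sup>+ x. ennreal (- f x) \<partial>\<mu>)"

definition betaA :: "seq set \<Rightarrow> (seq \<Rightarrow> real) \<Rightarrow> ereal" where
  "betaA S A = (SUP \<mu>\<in>invariant_probs S. eint \<mu> A)"

definition cont_d :: "real \<Rightarrow> seq set \<Rightarrow> (seq \<Rightarrow> real) \<Rightarrow> bool" where
  "cont_d lam S u \<longleftrightarrow> (\<forall>x\<in>S. \<forall>e>0. \<exists>\<delta>>0. \<forall>y\<in>S. dsh lam x y < \<delta> \<longrightarrow> \<bar>u x - u y\<bar> < e)"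

definition loc_holder :: "real \<Rightarrow> seq set \<Rightarrow> (seq \<Rightarrow> real) \<Rightarrow> bool" where
  "loc_holder lam S A \<longleftrightarrow> (\<exists>H>0. \<forall>k\<ge>1. \<forall>x\<in>S. \<forall>y\<in>S.
      dsh lam x y \<le> lam ^ k \<longrightarrow> A x - A y \<le> H * lam ^ k)"

definition sub_action :: "real \<Rightarrow> seq set \<Rightarrow> (seq \<Rightarrow> real) \<Rightarrow> (seq \<Rightarrow> real) \<Rightarrow> bool" where
  "sub_action lam S A u \<longleftrightarrow> cont_d lam S u \<and>
      (\<forall>x\<in>S. ereal (A x + u x - u (shift x)) \<le> betaA S A)"

end

theory Submission
  imports Defs
begin

(* Proof idea (Mane-type construction of the minimal sub-action).
   Let b = beta_A and f = A - b.  The candidate is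
        u_A(z) = sup { S_n f (y) : n >= 0, y in Sigma, sigma^n y = z },
   the largest Birkhoff sum of f along a finite past of z.

   1. For any map T on a set S, if the Birkhoff sums of f are uniformly bounded by K,
      this supremum is a nonnegative function bounded by K with f + u <= u o T, and it
      lies below every nonnegative w with f + w <= w o T.  This part is proved
      for an arbitrary map and comes first.
   2. Periodic orbits give invariant measures (uniform measure on the orbit), hence the
      Birkhoff average of A over a periodic orbit is at most beta_A; this makes beta_A
      finite and is the only place where measures enter.
   3. Closing lemma: by primitivity an orbit segment of length n can be closed up into a
      periodic orbit of period n + K0 passing through F-cylinders; with the Hoelder
      estimate for Birkhoff sums this bounds S_n f uniformly.
   4. Gluing a long past of z onto z' shows u_A is locally Hoelder (hence continuous). *)

section \<open>Birkhoff sums and the supremum over finite pasts\<close>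

definition birkhoff_sum :: "('a \<Rightarrow> 'a) \<Rightarrow> ('a \<Rightarrow> real) \<Rightarrow> nat \<Rightarrow> 'a \<Rightarrow> real" where
  "birkhoff_sum T f n x = (\<Sum>i<n. f ((T ^^ i) x))"

lemma birkhoff_sum_0 [simp]: "birkhoff_sum T f 0 x = 0"
  by (simp add: birkhoff_sum_def)

lemma birkhoff_sum_Suc: "birkhoff_sum T f (Suc n) x = birkhoff_sum T f n x + f ((T ^^ n) x)"
  by (simp add: birkhoff_sum_def)

lemma birkhoff_sum_add:
  "birkhoff_sum T f (n + k) x = birkhoff_sum T f n x + birkhoff_sum T f k ((T ^^ n) x)"
proof (induction k)
  case (Suc k)
  have "(T ^^ (n + k)) x = (T ^^ k) ((T ^^ n) x)"
    by (simp add: add.commute[of n k] funpow_add)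
  then show ?case using Suc by (simp add: birkhoff_sum_Suc)
qed simp

lemma birkhoff_sum_minus_const:
  "birkhoff_sum T (\<lambda>x. f x - b) n x = birkhoff_sum T f n x - real n * b"
  by (simp add: birkhoff_sum_def sum_subtractf)

text \<open>The supremum of the Birkhoff sums of f over all finite pasts (n, y) of z inside S;
  this is the minimal sub-action once these sums are bounded above.\<close>
definition past_sup :: "('a \<Rightarrow> 'a) \<Rightarrow> 'a set \<Rightarrow> ('a \<Rightarrow> real) \<Rightarrow> 'a \<Rightarrow> real" where
  "past_sup T S f z = (SUP q\<in>{(n, y). y \<in> S \<and> (T ^^ n) y = z}. birkhoff_sum T f (fst q) (snd q))"

lemma past_sup_upper:
  assumes bdd: "\<forall>n. \<forall>y\<in>S. birkhoff_sum T f n y \<le> K"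
    and "y \<in> S" "(T ^^ n) y = z"
  shows "birkhoff_sum T f n y \<le> past_sup T S f z"
proof -
  let ?P = "{(n, y). y \<in> S \<and> (T ^^ n) y = z}"
  have "(n, y) \<in> ?P" using assms by simp
  moreover have "bdd_above ((\<lambda>q. birkhoff_sum T f (fst q) (snd q)) ` ?P)"
    using bdd by (intro bdd_aboveI[of _ K]) auto
  ultimately have "(\<lambda>q. birkhoff_sum T f (fst q) (snd q)) (n, y) \<le> past_sup T S f z"
    unfolding past_sup_def by (rule cSUP_upper)
  then show ?thesis by simp
qed

lemma past_sup_least:
  assumes "z \<in> S" and "\<And>n y. y \<in> S \<Longrightarrow> (T ^^ n) y = z \<Longrightarrow> birkhoff_sum T f n y \<le> B"
  shows "past_sup T S f z \<le> B"
  unfolding past_sup_def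
proof (rule cSUP_least)
  have "(0, z) \<in> {(n, y). y \<in> S \<and> (T ^^ n) y = z}" using assms(1) by simp
  then show "{(n, y). y \<in> S \<and> (T ^^ n) y = z} \<noteq> {}" by blast
next
  fix q assume "q \<in> {(n, y). y \<in> S \<and> (T ^^ n) y = z}"
  then show "birkhoff_sum T f (fst q) (snd q) \<le> B" using assms(2) by auto
qed

text \<open>The trivial past makes the supremum nonnegative; the uniform bound K bounds it.\<close>
lemma past_sup_nonneg:
  assumes "\<forall>n. \<forall>y\<in>S. birkhoff_sum T f n y \<le> K" and "z \<in> S"
  shows "0 \<le> past_sup T S f z"
  using past_sup_upper[OF assms(1) assms(2), of 0] by simp

lemma past_sup_bounded:
  assumes "\<forall>n. \<forall>y\<in>S. birkhoff_sum T f n y \<le> K" and "z \<in> S"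
  shows "past_sup T S f z \<le> K"
  using assms by (intro past_sup_least) auto

text \<open>Sub-action inequality: every past of x extends by one step to a past of T x.\<close>
lemma past_sup_subaction:
  assumes bdd: "\<forall>n. \<forall>y\<in>S. birkhoff_sum T f n y \<le> K" and x: "x \<in> S"
  shows "f x + past_sup T S f x \<le> past_sup T S f (T x)"
proof -
  have "past_sup T S f x \<le> past_sup T S f (T x) - f x"
  proof (rule past_sup_least[OF x])
    fix n y assume y: "y \<in> S" and yx: "(T ^^ n) y = x"
    have "birkhoff_sum T f (Suc n) y \<le> past_sup T S f (T x)"
      by (rule past_sup_upper[OF bdd y]) (simp add: yx)
    then show "birkhoff_sum T f n y \<le> past_sup T S f (T x) - f x"
      by (simp add: birkhoff_sum_Suc yx)
  qed
  then show ?thesis by simp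
qed

text \<open>Minimality: iterating w \<ge> w o T - f along a past of z bounds its Birkhoff sum by w z.\<close>
lemma past_sup_minimal:
  assumes inv: "\<forall>x\<in>S. T x \<in> S"
    and w_nonneg: "\<forall>x\<in>S. 0 \<le> w x" and w_sub: "\<forall>x\<in>S. f x + w x \<le> w (T x)"
    and z: "z \<in> S"
  shows "past_sup T S f z \<le> w z"
proof (rule past_sup_least[OF z])
  fix n y assume y: "y \<in> S" and yz: "(T ^^ n) y = z"
  have orbit: "(T ^^ m) y \<in> S" for m
    by (induction m) (use y inv in auto)
  have chain: "birkhoff_sum T f m y + w y \<le> w ((T ^^ m) y)" for m
  proof (induction m)
    case (Suc m)
    have "f ((T ^^ m) y) + w ((T ^^ m) y) \<le> w ((T ^^ Suc m) y)"
      using w_sub orbit[of m] by simp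
    then show ?case using Suc by (simp add: birkhoff_sum_Suc)
  qed simp
  have "0 \<le> w y" using w_nonneg y by blast
  then show "birkhoff_sum T f n y \<le> w z"
    using chain[of n] unfolding yz by linarith
qed

section \<open>The shift and the metric\<close>

lemma funpow_shift: "(shift ^^ n) x = (\<lambda>j. x (n + j))"
  by (induction n arbitrary: x) (auto simp: shift_def)

lemma shift_in: "x \<in> SigmaM M \<Longrightarrow> shift x \<in> SigmaM M"
  by (auto simp: SigmaM_def shift_def)

lemma funpow_shift_in: "x \<in> SigmaM M \<Longrightarrow> (shift ^^ n) x \<in> SigmaM M"
  by (induction n) (auto simp: shift_in)

text \<open>Every symbol occurring in an admissible sequence lies in the core of the matrix,
  where primitivity provides connecting paths.\<close>
lemma symbol_in_core: "x \<in> SigmaM M \<Longrightarrow> x j \<in> (\<Inter>n. Bset M n)"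
proof -
  assume x: "x \<in> SigmaM M"
  have "x j \<in> Bset M n" for n
  proof (induction n arbitrary: j)
    case 0 then show ?case using x by (auto simp: Bset_def SigmaM_def)
  next
    case (Suc n)
    then show ?case using x Suc[of "Suc j"] by (auto simp: Bset_def SigmaM_def)
  qed
  then show ?thesis by blast
qed

lemma dsh_sym: "dsh lam x y = dsh lam y x"
  by (simp add: dsh_def eq_commute)

lemma dsh_le_agree:
  assumes "0 < lam" "lam < 1" "dsh lam x y \<le> lam ^ k" "i < k"
  shows "x i = y i"
proof (rule ccontr)
  assume ne: "x i \<noteq> y i"
  then have xy: "x \<noteq> y" by auto
  define j where "j = (LEAST j. x j \<noteq> y j)"
  have "j \<le> i" using ne unfolding j_def by (rule Least_le)
  then have "lam ^ k < lam ^ j" using assms by (intro power_strict_decreasing) auto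
  then show False using assms(3) xy by (simp add: dsh_def j_def)
qed

lemma agree_dsh_le:
  assumes "0 < lam" "lam < 1" "\<forall>i<k. x i = y i"
  shows "dsh lam x y \<le> lam ^ k"
proof (cases "x = y")
  case True then show ?thesis using assms by (simp add: dsh_def)
next
  case False
  then obtain i where "x i \<noteq> y i" by auto
  define j where "j = (LEAST j. x j \<noteq> y j)"
  have "x j \<noteq> y j" unfolding j_def by (rule LeastI) fact
  then have "k \<le> j" using assms(3) by (meson not_le)
  then have "lam ^ j \<le> lam ^ k" using assms by (intro power_decreasing) auto
  then show ?thesis using False by (simp add: dsh_def j_def)
qed

definition holder_const :: "real \<Rightarrow> seq set \<Rightarrow> (seq \<Rightarrow> real) \<Rightarrow> real \<Rightarrow> bool" where
  "holder_const lam S A H \<longleftrightarrow> 0 < H \<and>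
     (\<forall>k\<ge>1. \<forall>x\<in>S. \<forall>y\<in>S. (\<forall>i<k. x i = y i) \<longrightarrow> A x - A y \<le> H * lam ^ k)"

lemma loc_holder_iff_holder_const:
  assumes "0 < lam" "lam < 1"
  shows "loc_holder lam S A \<longleftrightarrow> (\<exists>H. holder_const lam S A H)"
proof -
  have "(\<forall>x\<in>S. \<forall>y\<in>S. dsh lam x y \<le> lam ^ k \<longrightarrow> A x - A y \<le> H * lam ^ k) \<longleftrightarrow>
        (\<forall>x\<in>S. \<forall>y\<in>S. (\<forall>i<k. x i = y i) \<longrightarrow> A x - A y \<le> H * lam ^ k)" for k H
    using dsh_le_agree[OF assms] agree_dsh_le[OF assms] by blast
  then show ?thesis unfolding loc_holder_def holder_const_def by simp
qed

lemma loc_holder_imp_cont_d: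
  assumes lam: "0 < lam" "lam < 1" and u: "loc_holder lam S u"
  shows "cont_d lam S u"
  unfolding cont_d_def
proof (intro ballI allI impI)
  fix x and e :: real assume x: "x \<in> S" and e: "e > 0"
  obtain H where H: "H > 0" and Hu: "\<forall>k\<ge>1. \<forall>x\<in>S. \<forall>y\<in>S. dsh lam x y \<le> lam ^ k \<longrightarrow> u x - u y \<le> H * lam ^ k"
    using u unfolding loc_holder_def by blast
  obtain k where k: "lam ^ k < e / H" using real_arch_pow_inv[of "e / H" lam] e H lam by auto
  have small: "H * lam ^ Suc k < e"
  proof -
    have "H * lam ^ Suc k \<le> H * lam ^ k" using lam H by (intro mult_left_mono power_decreasing) auto
    also have "\<dots> < e" using k H by (simp add: pos_less_divide_eq mult.commute)
    finally show ?thesis .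
  qed
  show "\<exists>\<delta>>0. \<forall>y\<in>S. dsh lam x y < \<delta> \<longrightarrow> \<bar>u x - u y\<bar> < e"
  proof (intro exI[of _ "lam ^ Suc k"] conjI ballI impI)
    fix y assume y: "y \<in> S" and d: "dsh lam x y < lam ^ Suc k"
    have "dsh lam x y \<le> lam ^ Suc k" "dsh lam y x \<le> lam ^ Suc k"
      using d dsh_sym[of lam x y] by simp_all
    moreover have "\<forall>x\<in>S. \<forall>y\<in>S. dsh lam x y \<le> lam ^ Suc k \<longrightarrow> u x - u y \<le> H * lam ^ Suc k"
      using Hu[rule_format, of "Suc k"] by simp
    ultimately have "u x - u y \<le> H * lam ^ Suc k" "u y - u x \<le> H * lam ^ Suc k"
      using x y by blast+
    then show "\<bar>u x - u y\<bar> < e" using small by linarith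
  qed (use lam in simp)
qed

lemma geom_le:
  fixes lam :: real assumes "0 < lam" "lam < 1"
  shows "(\<Sum>i<n. lam ^ (n - i)) \<le> lam / (1 - lam)"
proof (induction n)
  case 0 then show ?case using assms by simp
next
  case (Suc n)
  have "(\<Sum>i<Suc n. lam ^ (Suc n - i)) = lam * ((\<Sum>i<n. lam ^ (n - i)) + 1)"
    by (simp add: sum_distrib_left Suc_diff_le algebra_simps)
  also have "\<dots> \<le> lam * (lam / (1 - lam) + 1)"
    using Suc assms by (intro mult_left_mono) auto
  also have "\<dots> = lam / (1 - lam)" using assms by (simp add: field_simps)
  finally show ?case .
qed

lemma birkhoff_sum_holder:
  assumes lam: "0 < lam" "lam < 1" and A: "holder_const lam (SigmaM M) A H"
    and x: "x \<in> SigmaM M" and y: "y \<in> SigmaM M" and agree: "\<forall>i<n + k. x i = y i"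
  shows "birkhoff_sum shift A n x - birkhoff_sum shift A n y \<le> H * lam ^ k * (lam / (1 - lam))"
proof -
  have step: "A ((shift ^^ i) x) - A ((shift ^^ i) y) \<le> H * lam ^ k * lam ^ (n - i)"
    if i: "i < n" for i
  proof -
    have "\<forall>m<n - i + k. (shift ^^ i) x m = (shift ^^ i) y m"
      using agree i by (simp add: funpow_shift)
    then have "A ((shift ^^ i) x) - A ((shift ^^ i) y) \<le> H * lam ^ (n - i + k)"
      using A x y i by (simp add: holder_const_def funpow_shift_in)
    then show ?thesis by (simp add: power_add mult_ac)
  qed
  have "birkhoff_sum shift A n x - birkhoff_sum shift A n y
        = (\<Sum>i<n. A ((shift ^^ i) x) - A ((shift ^^ i) y))"
    by (simp add: birkhoff_sum_def sum_subtractf)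
  also have "\<dots> \<le> (\<Sum>i<n. H * lam ^ k * lam ^ (n - i))"
    using step by (intro sum_mono) simp
  also have "\<dots> \<le> H * lam ^ k * (lam / (1 - lam))"
    using A lam by (simp only: sum_distrib_left[symmetric]) (intro mult_left_mono geom_le, auto simp: holder_const_def)
  finally show ?thesis .
qed


section \<open>Periodic orbits carry invariant measures\<close>

definition coordinate_sets :: "seq set \<Rightarrow> seq set set" where
  "coordinate_sets S = {{x\<in>S. x j = a} | j a. True}"

lemma coordinate_sets_Pow: "coordinate_sets S \<subseteq> Pow S"
  by (auto simp: coordinate_sets_def)

lemma SigmaAlg_eq: "SigmaAlg S = sigma S (coordinate_sets S)"
  by (simp add: SigmaAlg_def coordinate_sets_def)

lemma space_SigmaAlg [simp]: "space (SigmaAlg S) = S"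
  unfolding SigmaAlg_eq using coordinate_sets_Pow by (rule space_measure_of)

lemma coordinate_set_sets: "{x\<in>S. x j = a} \<in> sets (SigmaAlg S)"
proof -
  have "{x\<in>S. x j = a} \<in> coordinate_sets S" by (auto simp: coordinate_sets_def)
  then show ?thesis unfolding SigmaAlg_eq using coordinate_sets_Pow by auto
qed

text \<open>Points are measurable, as countable intersections of coordinate sets.\<close>
lemma singleton_sets:
  assumes "q \<in> S" shows "{q} \<in> sets (SigmaAlg S)"
proof -
  have "{q} = (\<Inter>j. {x\<in>S. x j = q j})" using assms by auto
  also have "\<dots> \<in> sets (SigmaAlg S)"
    by (rule sets.countable_INT) (auto simp: coordinate_set_sets)
  finally show ?thesis .
qed

text \<open>The shift is measurable: preimages of coordinate sets are coordinate sets.\<close>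
lemma shift_measurable: "shift \<in> SigmaAlg (SigmaM M) \<rightarrow>\<^sub>M SigmaAlg (SigmaM M)"
  unfolding SigmaAlg_eq[of "SigmaM M"]
proof (rule measurable_measure_of)
  show "coordinate_sets (SigmaM M) \<subseteq> Pow (SigmaM M)" by (rule coordinate_sets_Pow)
  show "shift \<in> space (sigma (SigmaM M) (coordinate_sets (SigmaM M))) \<rightarrow> SigmaM M"
    using coordinate_sets_Pow by (auto simp: shift_in)
  fix Y assume "Y \<in> coordinate_sets (SigmaM M)"
  then obtain j a where Y: "Y = {x\<in>SigmaM M. x j = a}" by (auto simp: coordinate_sets_def)
  have "shift -` Y \<inter> space (sigma (SigmaM M) (coordinate_sets (SigmaM M))) = {x\<in>SigmaM M. x (Suc j) = a}"
    using Y coordinate_sets_Pow by (auto simp: shift_def shift_in[unfolded shift_def])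
  then show "shift -` Y \<inter> space (sigma (SigmaM M) (coordinate_sets (SigmaM M)))
      \<in> sets (sigma (SigmaM M) (coordinate_sets (SigmaM M)))"
    using coordinate_set_sets[of "SigmaM M" "Suc j" a] by (simp add: SigmaAlg_eq)
qed

lemma periodic_mod:
  assumes "(shift ^^ N) p = p"
  shows "(shift ^^ (k mod N)) p = (shift ^^ k) p"
proof -
  have "p (j + m * N) = p j" for j m
  proof (induction m)
    case (Suc m)
    then show ?case using fun_cong[OF assms, of "j + m * N"] by (simp add: funpow_shift algebra_simps)
  qed simp
  from this[of "k mod N + _" "k div N"] show ?thesis
    by (simp add: funpow_shift add.commute add.left_commute)
qed

lemma card_preimage_rotate:
  fixes g :: "nat \<Rightarrow> 'a"
  assumes N: "N > 0" and per: "\<And>k. g (k mod N) = g k"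
  shows "card ((\<lambda>i. g (Suc i)) -` X \<inter> {..<N}) = card (g -` X \<inter> {..<N})"
proof -
  define r where "r i = Suc i mod N" for i
  have inj: "inj_on r {..<N}"
    by (auto simp: inj_on_def r_def mod_Suc split: if_splits)
  have onto: "r ` {..<N} = {..<N}"
    using N by (intro endo_inj_surj inj) (auto simp: r_def)
  have "r ` ((\<lambda>i. g (Suc i)) -` X \<inter> {..<N}) = g -` X \<inter> {..<N}"
  proof (intro equalityI subsetI)
    fix j assume "j \<in> r ` ((\<lambda>i. g (Suc i)) -` X \<inter> {..<N})"
    then show "j \<in> g -` X \<inter> {..<N}" using N per by (auto simp: r_def)
  next
    fix j assume j: "j \<in> g -` X \<inter> {..<N}"
    then obtain i where "i < N" "j = r i" using onto by (metis IntD2 imageE lessThan_iff)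
    then show "j \<in> r ` ((\<lambda>i. g (Suc i)) -` X \<inter> {..<N})"
      using j per[of "Suc i"] by (auto simp: r_def)
  qed
  moreover have "inj_on r ((\<lambda>i. g (Suc i)) -` X \<inter> {..<N})"
    using inj by (rule inj_on_subset) auto
  ultimately show ?thesis by (metis card_image)
qed

definition orbit_measure :: "seq set \<Rightarrow> seq \<Rightarrow> nat \<Rightarrow> seq measure" where
  "orbit_measure S p N = distr (uniform_count_measure {..<N}) (SigmaAlg S) (\<lambda>i. (shift ^^ i) p)"

text \<open>Any map out of the finite index set {..<N} is measurable.\<close>
lemma orbit_map_measurable:
  assumes "p \<in> SigmaM M"
  shows "(\<lambda>i. (shift ^^ i) p) \<in> uniform_count_measure {..<N} \<rightarrow>\<^sub>M SigmaAlg (SigmaM M)"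
  unfolding measurable_cong_sets[OF sets_uniform_count_measure_count_space refl]
  using assms by (simp add: measurable_count_space_eq1 funpow_shift_in)

lemma orbit_measure_invariant:
  assumes p: "p \<in> SigmaM M" and N: "N > 0" and per: "(shift ^^ N) p = p"
  shows "orbit_measure (SigmaM M) p N \<in> invariant_probs (SigmaM M)"
proof -
  define U where "U = uniform_count_measure {..<N::nat}"
  define \<Sigma> where "\<Sigma> = SigmaAlg (SigmaM M)"
  define f where "f = (\<lambda>i. (shift ^^ i) p)"
  define \<mu> where "\<mu> = distr U \<Sigma> f"
  have f_meas: "f \<in> U \<rightarrow>\<^sub>M \<Sigma>"
    unfolding U_def \<Sigma>_def f_def by (rule orbit_map_measurable[OF p])
  have sh_meas: "shift \<in> \<Sigma> \<rightarrow>\<^sub>M \<Sigma>" unfolding \<Sigma>_def by (rule shift_measurable)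
  have sets_mu: "sets \<mu> = sets \<Sigma>" by (simp add: \<mu>_def)
  have shift_f: "shift \<circ> f = (\<lambda>i. f (Suc i))" by (auto simp: f_def)
  have "distr \<mu> \<mu> shift = distr U \<Sigma> (shift \<circ> f)"
    using distr_distr[OF sh_meas f_meas] by (simp add: \<mu>_def cong: distr_cong)
  also have "\<dots> = \<mu>"
  proof (rule measure_eqI)
    fix X assume "X \<in> sets (distr U \<Sigma> (shift \<circ> f))"
    then have X: "X \<in> sets \<Sigma>" by simp
    have "emeasure (distr U \<Sigma> (shift \<circ> f)) X = emeasure U ((\<lambda>i. f (Suc i)) -` X \<inter> {..<N})"
      using emeasure_distr[OF measurable_comp[OF f_meas sh_meas] X] shift_f
      by (simp add: U_def space_uniform_count_measure)
    also have "\<dots> = emeasure U (f -` X \<inter> {..<N})"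
      using card_preimage_rotate[OF N, of f X] periodic_mod[OF per]
      by (simp add: U_def emeasure_uniform_count_measure f_def)
    also have "\<dots> = emeasure \<mu> X"
      using emeasure_distr[OF f_meas X] by (simp add: \<mu>_def U_def space_uniform_count_measure)
    finally show "emeasure (distr U \<Sigma> (shift \<circ> f)) X = emeasure \<mu> X" .
  qed (simp add: \<mu>_def)
  finally have inv: "distr \<mu> \<mu> shift = \<mu>" .
  have "prob_space \<mu>"
    unfolding \<mu>_def using N
    by (intro prob_space.prob_space_distr[OF _ f_meas])
       (auto simp: U_def intro!: prob_space_uniform_count_measure)
  moreover have "shift \<in> \<mu> \<rightarrow>\<^sub>M \<mu>"
    using sh_meas by (simp add: measurable_cong_sets[OF sets_mu sets_mu])
  moreover have "orbit_measure (SigmaM M) p N = \<mu>"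
    by (simp add: orbit_measure_def \<mu>_def U_def \<Sigma>_def f_def)
  ultimately show ?thesis
    using inv sets_mu unfolding invariant_probs_def by (simp add: \<mu>_def \<Sigma>_def)
qed

lemma ennreal_average:
  fixes a :: "nat \<Rightarrow> real" assumes "N > 0"
  shows "(\<Sum>i<N. ennreal (1 / real N) * ennreal (a i)) = ennreal ((\<Sum>i<N. max (a i) 0) / real N)"
proof -
  have "ennreal (1 / real N) * ennreal (a i) = ennreal (max (a i) 0 / real N)" for i
  proof -
    have "ennreal (1 / real N) * ennreal (a i) = ennreal (1 / real N) * ennreal (max (a i) 0)"
      by (simp only: ennreal_max_0')
    also have "\<dots> = ennreal (max (a i) 0 / real N)"
      by (subst ennreal_mult[symmetric]) simp_all
    finally show ?thesis .
  qed
  then have "(\<Sum>i<N. ennreal (1 / real N) * ennreal (a i)) = (\<Sum>i<N. ennreal (max (a i) 0 / real N))"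
    by simp
  also have "\<dots> = ennreal ((\<Sum>i<N. max (a i) 0) / real N)"
    by (subst sum_ennreal) (simp_all add: sum_divide_distrib)
  finally show ?thesis .
qed

lemma orbit_measure_AE_orbit:
  assumes p: "p \<in> SigmaM M"
  shows "AE x in orbit_measure (SigmaM M) p N. x \<in> (\<lambda>i. (shift ^^ i) p) ` {..<N}"
proof (rule AE_I')
  define P where "P = (\<lambda>i. (shift ^^ i) p) ` {..<N}"
  have "P = (\<Union>i<N. {(shift ^^ i) p})" by (auto simp: P_def)
  also have "\<dots> \<in> sets (SigmaAlg (SigmaM M))"
    using p by (intro sets.finite_UN) (auto simp: singleton_sets funpow_shift_in)
  finally have "SigmaM M - P \<in> sets (SigmaAlg (SigmaM M))"
    by (metis sets.compl_sets space_SigmaAlg)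
  moreover have "(\<lambda>i. (shift ^^ i) p) -` (SigmaM M - P) \<inter> space (uniform_count_measure {..<N}) = {}"
    by (auto simp: space_uniform_count_measure P_def)
  ultimately show "SigmaM M - P \<in> null_sets (orbit_measure (SigmaM M) p N)"
    using emeasure_distr[OF orbit_map_measurable[OF p]]
    by (simp add: orbit_measure_def null_sets_def)
  show "{x \<in> space (orbit_measure (SigmaM M) p N). x \<notin> P} \<subseteq> SigmaM M - P"
    by (auto simp: orbit_measure_def)
qed

text \<open>The
  integrand need not be measurable: the measure lives on a finite set of points, on which
  every function agrees with a measurable simple function.\<close>
lemma nn_integral_orbit_measure:
  assumes p: "p \<in> SigmaM M" and N: "N > 0"
  shows "(\<integral>\<^sup>+x. ennreal (g x) \<partial>orbit_measure (SigmaM M) p N)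
         = ennreal ((\<Sum>i<N. max (g ((shift ^^ i) p)) 0) / real N)"
proof -
  define U where "U = uniform_count_measure {..<N::nat}"
  define f where "f = (\<lambda>i. (shift ^^ i) p)"
  define P where "P = f ` {..<N}"
  have f_meas: "f \<in> U \<rightarrow>\<^sub>M SigmaAlg (SigmaM M)"
    unfolding U_def f_def by (rule orbit_map_measurable[OF p])
  have mu: "orbit_measure (SigmaM M) p N = distr U (SigmaAlg (SigmaM M)) f"
    by (simp add: orbit_measure_def U_def f_def)
  define h where "h x = (\<Sum>q\<in>P. g q * indicator {q} x)" for x
  have h_eq: "h x = g x" if "x \<in> P" for x
  proof -
    have "h x = (\<Sum>q\<in>P. if x = q then g q else 0)"
      unfolding h_def by (intro sum.cong) (auto simp: indicator_def)
    then show ?thesis using that by (simp add: P_def)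
  qed
  have h_meas: "h \<in> borel_measurable (SigmaAlg (SigmaM M))"
    unfolding h_def using p
    by (intro borel_measurable_sum borel_measurable_times borel_measurable_const
        borel_measurable_indicator) (auto simp: P_def f_def singleton_sets funpow_shift_in)
  have "(\<integral>\<^sup>+x. ennreal (g x) \<partial>orbit_measure (SigmaM M) p N)
        = (\<integral>\<^sup>+x. ennreal (h x) \<partial>orbit_measure (SigmaM M) p N)"
    using orbit_measure_AE_orbit[OF p, of N]
    by (intro nn_integral_cong_AE) (auto elim!: AE_mp simp: h_eq P_def f_def)
  also have "\<dots> = (\<integral>\<^sup>+i. ennreal (h (f i)) \<partial>U)"
    unfolding mu using h_meas by (intro nn_integral_distr[OF f_meas]) simp
  also have "\<dots> = (\<integral>\<^sup>+i. ennreal (g (f i)) \<partial>U)"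
    by (intro nn_integral_cong) (simp add: h_eq P_def U_def space_uniform_count_measure)
  also have "\<dots> = (\<Sum>i<N. ennreal (1 / real N) * ennreal (g (f i)))"
    unfolding U_def uniform_count_measure_def by (subst nn_integral_point_measure_finite) simp_all
  also have "\<dots> = ennreal ((\<Sum>i<N. max (g (f i)) 0) / real N)"
    by (rule ennreal_average[OF N])
  finally show ?thesis by (simp add: f_def)
qed

lemma eint_orbit_measure:
  assumes p: "p \<in> SigmaM M" and N: "N > 0"
  shows "eint (orbit_measure (SigmaM M) p N) g = ereal (birkhoff_sum shift g N p / real N)"
proof -
  have pos_neg: "(\<Sum>i<N. max (g ((shift ^^ i) p)) 0) - (\<Sum>i<N. max (- g ((shift ^^ i) p)) 0)
               = birkhoff_sum shift g N p"
    unfolding birkhoff_sum_def sum_subtractf[symmetric] by (intro sum.cong) auto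
  show ?thesis
    unfolding eint_def nn_integral_orbit_measure[OF p N]
    using pos_neg by (simp add: enn2ereal_ennreal sum_nonneg diff_divide_distrib[symmetric])
qed

lemma periodic_average_le_betaA:
  assumes p: "p \<in> SigmaM M" and N: "N > 0" and per: "(shift ^^ N) p = p"
  shows "ereal (birkhoff_sum shift A N p / real N) \<le> betaA (SigmaM M) A"
  unfolding betaA_def eint_orbit_measure[OF p N, symmetric]
  by (rule SUP_upper[OF orbit_measure_invariant[OF p N per]])

lemma eint_le_bound:
  assumes "prob_space \<mu>" "\<forall>x\<in>space \<mu>. A x \<le> C"
  shows "eint \<mu> A \<le> ereal (max C 0)"
proof -
  have "(\<integral>\<^sup>+x. ennreal (A x) \<partial>\<mu>) \<le> (\<integral>\<^sup>+x. ennreal (max C 0) \<partial>\<mu>)"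
    using assms(2) by (intro nn_integral_mono ennreal_leI) auto
  also have "\<dots> = ennreal (max C 0)"
    using prob_space.emeasure_space_1[OF assms(1)] by simp
  finally have "enn2ereal (\<integral>\<^sup>+x. ennreal (A x) \<partial>\<mu>) \<le> ereal (max C 0)"
    by (metis enn2ereal_ennreal less_eq_ennreal.rep_eq max.cobounded2)
  then show ?thesis unfolding eint_def
    by (rule ereal_diff_le_mono_left) (rule enn2ereal_nonneg)
qed


section \<open>Closing orbits and the uniform bound on Birkhoff sums\<close>

definition primitive_paths :: "(nat \<Rightarrow> nat \<Rightarrow> bool) \<Rightarrow> nat set \<Rightarrow> nat \<Rightarrow> bool" where
  "primitive_paths M F K0 \<longleftrightarrow> (\<forall>i\<in>(\<Inter>n. Bset M n). \<forall>j\<in>(\<Inter>n. Bset M n).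
     \<exists>l::nat \<Rightarrow> nat. l 0 = i \<and> l (Suc K0) = j \<and> (\<forall>t\<in>{1..K0}. l t \<in> F)
        \<and> (\<forall>t\<le>K0. M (l t) (l (Suc t))))"

lemma primitive_with_iff: "primitive_with M F \<longleftrightarrow> (\<exists>K0. primitive_paths M F K0)"
  by (simp add: primitive_with_def primitive_paths_def)

lemma periodic_extension_admissible:
  assumes L: "L > 0" and closed: "w L = w 0" and steps: "\<And>t. t < L \<Longrightarrow> M (w t) (w (Suc t))"
  shows "(\<lambda>j. w (j mod L)) \<in> SigmaM M"
proof -
  have "M (w (j mod L)) (w (Suc j mod L))" for j
  proof (cases "Suc (j mod L) < L")
    case True
    then have "Suc j mod L = Suc (j mod L)" by (metis mod_Suc_eq mod_less)
    then show ?thesis using steps[of "j mod L"] L by simp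
  next
    case False
    then have "Suc (j mod L) = L" using L by (meson Suc_lessI mod_less_divisor)
    then show ?thesis using steps[of "j mod L"] closed L by (simp add: mod_Suc)
  qed
  then show ?thesis by (simp add: SigmaM_def)
qed

lemma close_orbit_segment:
  assumes y: "y \<in> SigmaM M" and n: "n \<ge> 1"
    and l0: "l 0 = y (n - 1)" and lK: "l (Suc K) = y 0" and lM: "\<forall>t\<le>K. M (l t) (l (Suc t))"
  shows "\<exists>p\<in>SigmaM M. (shift ^^ (n + K)) p = p \<and> (\<forall>i<n. p i = y i)
           \<and> (\<forall>j<K. p (n + j) = l (Suc j))"
proof -
  define L where "L = n + K"
  define w where "w t = (if t < n then y t else l (Suc t - n))" for t
  define p where "p j = w (j mod L)" for j
  have L: "L > 0" using n by (simp add: L_def)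
  have w_path: "w t = l (Suc t - n)" if "n - 1 \<le> t" for t
    using that l0 by (cases "t < n") (auto simp: w_def intro: arg_cong[of _ _ y])
  have "w L = w 0" using w_path[of L] lK n by (simp add: L_def w_def)
  moreover have "M (w t) (w (Suc t))" if t: "t < L" for t
  proof (cases "Suc t < n")
    case True
    then show ?thesis using y by (simp add: w_def SigmaM_def)
  next
    case False
    then have "w t = l (Suc t - n)" "w (Suc t) = l (Suc (Suc t - n))" "Suc t - n \<le> K"
      using w_path[of t] w_path[of "Suc t"] t by (simp_all add: L_def Suc_diff_le)
    then show ?thesis using lM by simp
  qed
  ultimately have "p \<in> SigmaM M"
    unfolding p_def using periodic_extension_admissible[OF L] by blast
  moreover have "(shift ^^ (n + K)) p = p"
    by (simp add: funpow_shift p_def L_def fun_eq_iff)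
  moreover have "\<forall>i<n. p i = y i" "\<forall>j<K. p (n + j) = l (Suc j)"
    by (simp_all add: p_def w_def L_def)
  ultimately show ?thesis by blast
qed

text \<open>beta_A is a real number: it is at most sup A (up to sign) and at least the average of
  A over a periodic orbit, which exists by the closing lemma.\<close>
lemma betaA_finite:
  assumes ne: "SigmaM M \<noteq> {}" and prim: "primitive_with M F" and C: "\<forall>x\<in>SigmaM M. A x \<le> C"
  shows "\<exists>b. betaA (SigmaM M) A = ereal b"
proof -
  have upper: "betaA (SigmaM M) A \<le> ereal (max C 0)"
    unfolding betaA_def
  proof (rule SUP_least)
    fix \<mu> assume "\<mu> \<in> invariant_probs (SigmaM M)"
    then show "eint \<mu> A \<le> ereal (max C 0)"
      using C by (intro eint_le_bound) (auto simp: invariant_probs_def)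
  qed
  obtain K0 where K0: "primitive_paths M F K0" using prim by (auto simp: primitive_with_iff)
  obtain x0 where x0: "x0 \<in> SigmaM M" using ne by blast
  obtain l where "l 0 = x0 0" "l (Suc K0) = x0 0" "\<forall>t\<le>K0. M (l t) (l (Suc t))"
    using K0 symbol_in_core[OF x0, of 0] unfolding primitive_paths_def by blast
  then obtain p where p: "p \<in> SigmaM M" "(shift ^^ (1 + K0)) p = p"
    using close_orbit_segment[OF x0, of 1 l K0] by auto
  have "ereal (birkhoff_sum shift A (1 + K0) p / real (1 + K0)) \<le> betaA (SigmaM M) A"
    by (rule periodic_average_le_betaA[OF p(1) _ p(2)]) simp
  then have "betaA (SigmaM M) A \<noteq> - \<infinity>" by auto
  moreover have "betaA (SigmaM M) A \<noteq> \<infinity>"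
    using upper by (metis ereal_infty_less_eq2(1) PInfty_neq_ereal(1))
  ultimately show ?thesis by (cases "betaA (SigmaM M) A") auto
qed

text \<open>Uniform bound on the Birkhoff sums of A - beta_A: close the orbit segment into a
  periodic orbit (whose A-sum is at most (n + K0) beta_A), pay at most K0 (beta_A - c) for
  the closing path through F, and compare the two segments by bounded distortion.\<close>
lemma birkhoff_sum_bounded:
  assumes lam: "0 < lam" "lam < 1" and A: "holder_const lam (SigmaM M) A H"
    and beta: "betaA (SigmaM M) A = ereal b"
    and cF: "\<forall>x\<in>(\<Union>i\<in>F. cyl (SigmaM M) i). c \<le> A x"
    and K0: "primitive_paths M F K0" and y: "y \<in> SigmaM M"
  shows "birkhoff_sum shift (\<lambda>x. A x - b) n y \<le> max 0 (real K0 * (b - c) + H * (lam / (1 - lam)))"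
proof (cases "n = 0")
  case False
  then have n: "n \<ge> 1" by simp
  obtain l where l0: "l 0 = y (n - 1)" and lK: "l (Suc K0) = y 0"
    and lF: "\<forall>t\<in>{1..K0}. l t \<in> F" and lM: "\<forall>t\<le>K0. M (l t) (l (Suc t))"
    using K0 symbol_in_core[OF y, of "n - 1"] symbol_in_core[OF y, of 0]
    unfolding primitive_paths_def by blast
  obtain p where p: "p \<in> SigmaM M" and per: "(shift ^^ (n + K0)) p = p"
    and agree: "\<forall>i<n. p i = y i" and path: "\<forall>j<K0. p (n + j) = l (Suc j)"
    using close_orbit_segment[OF y n l0 lK lM] by blast
  have "ereal (birkhoff_sum shift A (n + K0) p / real (n + K0)) \<le> ereal b"
    using periodic_average_le_betaA[OF p _ per, of A] n beta by simp
  then have periodic: "birkhoff_sum shift A (n + K0) p \<le> real (n + K0) * b"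
    using n by (simp add: divide_le_eq mult.commute)
  have "c \<le> A ((shift ^^ j) ((shift ^^ n) p))" if j: "j < K0" for j
  proof -
    have "(shift ^^ j) ((shift ^^ n) p) \<in> cyl (SigmaM M) (l (Suc j))"
      using p path j by (simp add: cyl_def funpow_shift_in) (simp add: funpow_shift)
    moreover have "l (Suc j) \<in> F" using lF j by auto
    ultimately show ?thesis using cF by blast
  qed
  then have tail: "real K0 * c \<le> birkhoff_sum shift A K0 ((shift ^^ n) p)"
    unfolding birkhoff_sum_def using sum_bounded_below[of "{..<K0}" c] by simp
  have "birkhoff_sum shift A n y - birkhoff_sum shift A n p \<le> H * lam ^ 0 * (lam / (1 - lam))"
    using agree by (intro birkhoff_sum_holder[OF lam A y p]) simp
  then show ?thesis
    using periodic tail birkhoff_sum_add[of shift A n K0 p]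
    by (simp add: birkhoff_sum_minus_const algebra_simps)
qed (simp add: birkhoff_sum_def)


section \<open>Regularity of the supremum over finite pasts\<close>

lemma glue_past:
  assumes y: "y \<in> SigmaM M" and yz: "(shift ^^ n) y = z"
    and z': "z' \<in> SigmaM M" and first: "z 0 = z' 0"
  shows "\<exists>y'\<in>SigmaM M. (shift ^^ n) y' = z' \<and> (\<forall>i<n. y' i = y i)"
proof -
  define y' where "y' j = (if j < n then y j else z' (j - n))" for j
  have yM: "M (y i) (y (Suc i))" and z'M: "M (z' i) (z' (Suc i))" for i
    using y z' by (simp_all add: SigmaM_def)
  have "M (y' j) (y' (Suc j))" for j
  proof (cases "Suc j < n")
    case True then show ?thesis using yM[of j] by (simp add: y'_def)
  next
    case False
    show ?thesis
    proof (cases "j < n")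
      case True
      with False have "Suc j = n" by simp
      moreover have "y n = z' 0" using fun_cong[OF yz, of 0] first by (simp add: funpow_shift)
      ultimately show ?thesis using True yM[of j] by (simp add: y'_def)
    next
      case False
      then show ?thesis using z'M[of "j - n"] by (simp add: y'_def Suc_diff_le)
    qed
  qed
  then have "y' \<in> SigmaM M" by (simp add: SigmaM_def)
  moreover have "(shift ^^ n) y' = z'" by (simp add: funpow_shift y'_def fun_eq_iff)
  ultimately show ?thesis by (auto simp: y'_def)
qed

lemma past_sup_holder:
  assumes lam: "0 < lam" "lam < 1" and f: "holder_const lam (SigmaM M) f H"
    and bdd: "\<forall>n. \<forall>y\<in>SigmaM M. birkhoff_sum shift f n y \<le> K"
  shows "holder_const lam (SigmaM M) (past_sup shift (SigmaM M) f) (H * (lam / (1 - lam)))"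
  unfolding holder_const_def
proof (intro conjI allI impI ballI)
  show "0 < H * (lam / (1 - lam))" using f lam by (simp add: holder_const_def)
  fix k z z' assume k: "1 \<le> k" and z: "z \<in> SigmaM M" and z': "z' \<in> SigmaM M"
    and agree: "\<forall>i<k. z i = z' i"
  have "past_sup shift (SigmaM M) f z \<le> past_sup shift (SigmaM M) f z' + H * (lam / (1 - lam)) * lam ^ k"
  proof (rule past_sup_least[OF z])
    fix n y assume y: "y \<in> SigmaM M" and yz: "(shift ^^ n) y = z"
    obtain y' where y': "y' \<in> SigmaM M" "(shift ^^ n) y' = z'" and prefix: "\<forall>i<n. y' i = y i"
      using glue_past[OF y yz z'] agree k by auto
    have "\<forall>i<n + k. y i = y' i"
    proof (intro allI impI)
      fix i assume i: "i < n + k"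
      show "y i = y' i"
      proof (cases "i < n")
        case False
        have "y i = z (i - n)" "y' i = z' (i - n)"
          using fun_cong[OF yz, of "i - n"] fun_cong[OF y'(2), of "i - n"] False
          by (simp_all add: funpow_shift)
        moreover have "i - n < k" using i False by simp
        ultimately show ?thesis using agree by simp
      qed (use prefix in simp)
    qed
    then have "birkhoff_sum shift f n y - birkhoff_sum shift f n y' \<le> H * lam ^ k * (lam / (1 - lam))"
      by (rule birkhoff_sum_holder[OF lam f y y'(1)])
    moreover have "birkhoff_sum shift f n y' \<le> past_sup shift (SigmaM M) f z'"
      by (rule past_sup_upper[OF bdd y'])
    ultimately show "birkhoff_sum shift f n y
        \<le> past_sup shift (SigmaM M) f z' + H * (lam / (1 - lam)) * lam ^ k"
      by (simp add: mult_ac)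
  qed
  then show "past_sup shift (SigmaM M) f z - past_sup shift (SigmaM M) f z'
      \<le> H * (lam / (1 - lam)) * lam ^ k" by simp
qed

lemma sub_action_iff:
  assumes "betaA S A = ereal b"
  shows "sub_action lam S A u \<longleftrightarrow> cont_d lam S u \<and> (\<forall>x\<in>S. (A x - b) + u x \<le> u (shift x))"
  unfolding sub_action_def assms by (auto simp: algebra_simps)

theorem mainTheorem4:
  fixes M :: "nat \<Rightarrow> nat \<Rightarrow> bool" and F :: "nat set" and lam :: real
    and A :: "seq \<Rightarrow> real"
  assumes lam: "0 < lam" "lam < 1"
    and prim: "primitive_with M F"
    and bdd_above: "\<exists>C. \<forall>x\<in>SigmaM M. A x \<le> C"
    and holder: "loc_holder lam (SigmaM M) A"
    and inf_F: "\<exists>c. \<forall>x\<in>(\<Union>i\<in>F. cyl (SigmaM M) i). c \<le> A x"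
  shows "\<exists>uA. (\<forall>x\<in>SigmaM M. 0 \<le> uA x)
            \<and> (\<exists>B. \<forall>x\<in>SigmaM M. \<bar>uA x\<bar> \<le> B)
            \<and> loc_holder lam (SigmaM M) uA
            \<and> sub_action lam (SigmaM M) A uA
            \<and> (\<forall>u. (\<forall>x\<in>SigmaM M. 0 \<le> u x) \<and> sub_action lam (SigmaM M) A u
                   \<longrightarrow> (\<forall>x\<in>SigmaM M. uA x \<le> u x))
            \<and> (\<forall>v. ((\<forall>x\<in>SigmaM M. 0 \<le> v x)
                   \<and> (\<exists>B. \<forall>x\<in>SigmaM M. \<bar>v x\<bar> \<le> B)
                   \<and> loc_holder lam (SigmaM M) v
                   \<and> sub_action lam (SigmaM M) A v
                   \<and> (\<forall>u. (\<forall>x\<in>SigmaM M. 0 \<le> u x) \<and> sub_action lam (SigmaM M) A u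
                          \<longrightarrow> (\<forall>x\<in>SigmaM M. v x \<le> u x)))
                 \<longrightarrow> (\<forall>x\<in>SigmaM M. v x = uA x))"
proof (cases "SigmaM M = {}")
  case True
  then show ?thesis
    by (intro exI[of _ "\<lambda>x. 0"]) (simp add: sub_action_def cont_d_def loc_holder_def exI[of _ 1])
next
  case False
  let ?S = "SigmaM M"
  obtain b where beta: "betaA ?S A = ereal b"
    using betaA_finite[OF False prim] bdd_above by blast
  let ?f = "\<lambda>x. A x - b"
  obtain H where H: "holder_const lam ?S A H" using holder loc_holder_iff_holder_const[OF lam] by blast
  obtain K0 where K0: "primitive_paths M F K0" using prim primitive_with_iff by blast
  obtain c where c: "\<forall>x\<in>(\<Union>i\<in>F. cyl ?S i). c \<le> A x" using inf_F by blast
  obtain K where bdd: "\<forall>n. \<forall>y\<in>?S. birkhoff_sum shift ?f n y \<le> K"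
    by (rule that) (use birkhoff_sum_bounded[OF lam H beta c K0] in blast)
  define u where "u = past_sup shift ?S ?f"
  have "holder_const lam ?S ?f H" using H by (simp add: holder_const_def)
  then have u_holder: "loc_holder lam ?S u"
    unfolding u_def loc_holder_iff_holder_const[OF lam] using past_sup_holder[OF lam _ bdd] by blast
  have u_sub: "sub_action lam ?S A u"
    unfolding sub_action_iff[OF beta]
    using loc_holder_imp_cont_d[OF lam u_holder] past_sup_subaction[OF bdd] by (simp add: u_def)
  have u_min: "\<forall>x\<in>?S. u x \<le> w x" if "\<forall>x\<in>?S. 0 \<le> w x" "sub_action lam ?S A w" for w
    using that past_sup_minimal[of ?S shift w ?f] shift_in
    unfolding sub_action_iff[OF beta] u_def by blast
  have "\<forall>x\<in>?S. 0 \<le> u x \<and> u x \<le> K"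
    unfolding u_def using past_sup_nonneg[OF bdd] past_sup_bounded[OF bdd] by blast
  then show ?thesis
    using u_holder u_sub u_min by (intro exI[of _ u]) (force intro: antisym)
qed

end
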